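(* For $1\le k\le m<2n$, $\sigma_k^m:=p(v(k,m),v(k,m))$ equals $q^2$ if $m=\phi(k)$, and equals $q$ otherwise.
   Context: Let $\mathbf{k}$ be a field, $G$ an abelian group, $n\ge2$, $g_1,\dots,g_n\in G$, characters $\chi^1,\dots,\chi^n:G\to\mathbf{k}^*$, $p_{ij}=\chi^i(g_j)$. Fix $q\in\mathbf{k}^*$ and assume $p_{ii}=q$ ($1\le i<n$), $p_{nn}=q^2$, $p_{i,i-1}p_{i-1,i}=q^{-1}$ ($1<i<n$), $p_{n-1,n}p_{n,n-1}=q^{-2}$, $p_{ij}p_{ji}=1$ ($j>i+1$). For words $u,v$ in $x_1,\dots,x_n$, $p(u,v)=\chi^u(g_v)$, where $g_v$ (resp. $\chi^u$) is obtained by replacing each $x_i$ by $g_i$ (resp. $\chi^i$); $p$ is bimultiplicative. For $n<i<2n$, $x_i:=x_{2n-i}$; $\phi(i)=2n-i$; $v(k,m)$ is the word $x_kx_{k+1}\cdots x_m$. *)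

theory Defs
  imports Main
begin

text \<open>Words in the letters x_1,...,x_n are lists of indices.\<close>

definition is_character :: "('g::ab_group_add \<Rightarrow> 'k::field) \<Rightarrow> bool" where
  "is_character c \<longleftrightarrow> (\<forall>a b. c (a + b) = c a * c b) \<and> (\<forall>a. c a \<noteq> 0)"

definition g_word :: "(nat \<Rightarrow> 'g::ab_group_add) \<Rightarrow> nat list \<Rightarrow> 'g" where
  "g_word g v = sum_list (map g v)"

definition chi_word :: "(nat \<Rightarrow> 'g \<Rightarrow> 'k::field) \<Rightarrow> nat list \<Rightarrow> 'g \<Rightarrow> 'k" where
  "chi_word chi u h = prod_list (map (\<lambda>i. chi i h) u)"

definition pw :: "(nat \<Rightarrow> 'g::ab_group_add \<Rightarrow> 'k::field) \<Rightarrow> (nat \<Rightarrow> 'g) \<Rightarrow> nat list \<Rightarrow> nat list \<Rightarrow> 'k" where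
  "pw chi g u v = chi_word chi u (g_word g v)"

text \<open>Letter index: x_i := x_{2n-i} for n < i < 2n.\<close>
definition letter :: "nat \<Rightarrow> nat \<Rightarrow> nat" where
  "letter n i = (if i \<le> n then i else 2 * n - i)"

definition vw :: "nat \<Rightarrow> nat \<Rightarrow> nat \<Rightarrow> nat list" where
  "vw n k m = map (letter n) [k..<Suc m]"

definition phi :: "nat \<Rightarrow> nat \<Rightarrow> nat" where
  "phi n i = 2 * n - i"

end

theory Submission
  imports Defs
begin

text \<open>Write \<open>p_ij p_ji = q^(\<alpha>_i, \<alpha>_j)\<close> for the symmetrised Cartan form of type C_n. As \<open>p\<close>
  is bimultiplicative, \<open>p(v, v) = q^((\<beta>, \<beta>)/2)\<close> where \<open>\<beta>\<close> is the sum of the roots indexed by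
  the letters of \<open>v\<close>. The form of type C_n is the folding of the form of type A_(2n-1) along
  \<open>i \<mapsto> 2n - i\<close>; so for \<open>v = v(k, m)\<close> we get \<open>(\<beta>, \<beta>) = (\<gamma>, \<gamma>) + (\<gamma>, \<gamma>')\<close> with \<open>\<gamma> = e_k - e_(m+1)\<close>
  and its mirror image \<open>\<gamma>' = e_(2n-m) - e_(2n-k+1)\<close>. Here \<open>(\<gamma>, \<gamma>) = 2\<close>, and by parity
  \<open>(\<gamma>, \<gamma>') = 2\<close> if \<open>\<gamma> = \<gamma>'\<close>, i.e. \<open>m = 2n - k\<close>, and \<open>0\<close> otherwise.\<close>

lemma character_zero: "is_character c \<Longrightarrow> c 0 = 1"
  unfolding is_character_def by (metis add_0 mult_cancel_right2)

lemma character_sum_list: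
  "is_character c \<Longrightarrow> c (\<Sum>y\<leftarrow>v. g y) = (\<Prod>y\<leftarrow>v. c (g y))"
  by (induction v) (auto simp: character_zero is_character_def)

lemma pw_eq_prod_pairs:
  assumes "\<And>x. x \<in> set u \<Longrightarrow> is_character (chi x)"
  shows "pw chi g u v = (\<Prod>x\<leftarrow>u. \<Prod>y\<leftarrow>v. chi x (g y))"
  using assms unfolding pw_def chi_word_def g_word_def
  by (induction u) (auto simp: character_sum_list)

lemma prod_list_map_mult:
  "(\<Prod>x\<leftarrow>xs. f x * g x) = (\<Prod>x\<leftarrow>xs. f x) * (\<Prod>x\<leftarrow>xs. g x :: 'a::comm_monoid_mult)"
  by (induction xs) (simp_all add: ac_simps)

lemma prod_list_power_int:
  "(q::'a::field) \<noteq> 0 \<Longrightarrow> (\<Prod>x\<leftarrow>xs. q powi f x) = q powi (\<Sum>x\<leftarrow>xs. f x)"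
  by (induction xs) (simp_all add: power_int_add)

lemma prod_pairs_eq_power_int:
  fixes P :: "'a \<Rightarrow> 'a \<Rightarrow> 'k::field" and E :: "'a \<Rightarrow> 'a \<Rightarrow> int"
  assumes "q \<noteq> 0"
    and "\<And>x y. x \<in> set w \<Longrightarrow> y \<in> set w \<Longrightarrow> E x y = E y x"
    and "\<And>x y. x \<in> set w \<Longrightarrow> y \<in> set w \<Longrightarrow> P x y * P y x = q powi E x y"
    and "\<And>x. x \<in> set w \<Longrightarrow> P x x = q powi D x"
    and "\<And>x. x \<in> set w \<Longrightarrow> E x x = 2 * D x"
    and "2 * e = (\<Sum>x\<leftarrow>w. \<Sum>y\<leftarrow>w. E x y)"
  shows "(\<Prod>x\<leftarrow>w. \<Prod>y\<leftarrow>w. P x y) = q powi e"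
  using assms(2-)
proof (induction w arbitrary: e)
  case Nil
  then show ?case by simp
next
  case (Cons b w)
  define X where "X = (\<Sum>x\<leftarrow>w. E x b)"
  have sum_E: "(\<Sum>x\<leftarrow>b # w. \<Sum>y\<leftarrow>b # w. E x y) = 2 * (D b + X) + (\<Sum>x\<leftarrow>w. \<Sum>y\<leftarrow>w. E x y)"
  proof -
    have "(\<Sum>y\<leftarrow>w. E b y) = X"
      unfolding X_def by (rule arg_cong[where f = sum_list], rule map_cong) (simp_all add: Cons.prems(1))
    then show ?thesis
      using Cons.prems(4) by (simp add: sum_list_addf X_def)
  qed
  have "(\<Prod>x\<leftarrow>w. P x b * P b x) = q powi X"
    unfolding X_def using Cons.prems(2) \<open>q \<noteq> 0\<close>
    by (simp add: prod_list_power_int[symmetric] cong: map_cong)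
  moreover have "(\<Prod>x\<leftarrow>w. \<Prod>y\<leftarrow>w. P x y) = q powi (e - D b - X)"
    using Cons.prems sum_E by (intro Cons.IH) auto
  ultimately have "(\<Prod>x\<leftarrow>b # w. \<Prod>y\<leftarrow>b # w. P x y) = q powi D b * q powi X * q powi (e - D b - X)"
    using Cons.prems(3) by (simp add: prod_list_map_mult ac_simps)
  also have "\<dots> = q powi e"
    using \<open>q \<noteq> 0\<close> by (simp add: power_int_add[symmetric])
  finally show ?case .
qed

definition cartan_A :: "nat \<Rightarrow> nat \<Rightarrow> int" where
  "cartan_A i j = (if i = j then 2 else if i = j + 1 \<or> j = i + 1 then -1 else 0)"

text \<open>\<open>cartan_A i j = (\<alpha>_i, \<alpha>_j)\<close> for the roots \<open>\<alpha>_i = e_i - e_(i+1)\<close> of type A.\<close>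

lemma cartan_A_eq_delta:
  "cartan_A i j = (of_bool (i = j) - of_bool (Suc i = j)) - (of_bool (i = Suc j) - of_bool (Suc i = Suc j))"
  by (simp add: cartan_A_def)

lemma sum_delta_telescope:
  "k \<le> Suc m \<Longrightarrow> (\<Sum>i=k..m. of_bool (i = x) - of_bool (Suc i = x) :: int) = of_bool (k = x) - of_bool (Suc m = x)"
  using sum_Suc_diff[of k m "\<lambda>i. - of_bool (i = x) :: int"] by simp

lemma sum_cartan_A:
  assumes "k \<le> Suc m" "c \<le> Suc d"
  shows "(\<Sum>i=k..m. \<Sum>j=c..d. cartan_A i j) =
    (of_bool (k = c) - of_bool (k = Suc d)) - (of_bool (Suc m = c) - of_bool (Suc m = Suc d))"
proof -
  have inner: "(\<Sum>j=c..d. cartan_A i j) =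
      (of_bool (i = c) - of_bool (Suc i = c)) - (of_bool (i = Suc d) - of_bool (Suc i = Suc d))" for i
  proof -
    define h :: "nat \<Rightarrow> int" where "h j = of_bool (Suc i = j) - of_bool (i = j)" for j
    have "(\<Sum>j=c..d. cartan_A i j) = (\<Sum>j=c..d. h (Suc j) - h j)"
      unfolding cartan_A_eq_delta h_def by (rule sum.cong) auto
    also have "\<dots> = h (Suc d) - h c"
      by (rule sum_Suc_diff[OF assms(2)])
    finally show ?thesis by (simp add: h_def)
  qed
  have "(\<Sum>i=k..m. \<Sum>j=c..d. cartan_A i j) =
      (\<Sum>i=k..m. of_bool (i = c) - of_bool (Suc i = c))
      - (\<Sum>i=k..m. of_bool (i = Suc d) - of_bool (Suc i = Suc d))"
    unfolding inner by (rule sum_subtractf)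
  then show ?thesis
    by (simp only: sum_delta_telescope[OF assms(1)])
qed

lemma cartan_A_reflect:
  assumes "i \<le> 2 * n" "j \<le> 2 * n"
  shows "cartan_A (2 * n - i) (2 * n - j) = cartan_A i j"
proof -
  have "2 * n - i = 2 * n - j \<longleftrightarrow> i = j" "2 * n - i = 2 * n - j + 1 \<longleftrightarrow> j = i + 1"
    "2 * n - j = 2 * n - i + 1 \<longleftrightarrow> i = j + 1"
    using assms by linarith+
  then show ?thesis by (auto simp: cartan_A_def)
qed

lemma cartan_A_mirror:
  assumes "i \<le> n" "j \<le> n"
  shows "cartan_A i (2 * n - j) = (if i = n \<and> j = n then 2 else if i + j + 1 = 2 * n then -1 else 0)"
proof -
  have "i = 2 * n - j \<longleftrightarrow> i = n \<and> j = n" "i \<noteq> 2 * n - j + 1"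
    "2 * n - j = i + 1 \<longleftrightarrow> i + j + 1 = 2 * n"
    using assms by linarith+
  then show ?thesis by (simp add: cartan_A_def)
qed

text \<open>The long simple root is \<open>\<alpha>_n\<close>, matching \<open>p_nn = q\<^sup>2\<close> and \<open>p_(n-1)n p_n(n-1) = q^(-2)\<close>.\<close>

definition cartan_C :: "nat \<Rightarrow> nat \<Rightarrow> nat \<Rightarrow> int" where
  "cartan_C n i j =
     (if i = j then (if i = n then 4 else 2)
      else if (i = n - 1 \<and> j = n) \<or> (i = n \<and> j = n - 1) then -2
      else if i = j + 1 \<or> j = i + 1 then -1 else 0)"

lemma cartan_C_sym: "cartan_C n i j = cartan_C n j i"
  unfolding cartan_C_def by auto

lemma cartan_C_eq:
  assumes "1 \<le> i" "i \<le> n" "1 \<le> j" "j \<le> n"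
  shows "cartan_C n i j = cartan_A i j + cartan_A i (2 * n - j)"
proof -
  consider "i = j" | "i = j + 1" | "j = i + 1" | "i + 1 < j \<or> j + 1 < i"
    by linarith
  then have "cartan_C n i j = cartan_A i j
      + (if i = n \<and> j = n then 2 else if i + j + 1 = 2 * n then -1 else 0)"
  proof cases
    case 1
    moreover have "i + j + 1 \<noteq> 2 * n" using 1 by presburger
    ultimately show ?thesis by (simp add: cartan_C_def cartan_A_def)
  next
    case 2
    moreover have "(i = n - 1 \<and> j = n \<or> i = n \<and> j = n - 1) \<longleftrightarrow> i = n"
      "i + j + 1 = 2 * n \<longleftrightarrow> i = n" "j \<noteq> n"
      using 2 assms by linarith+
    ultimately show ?thesis by (simp add: cartan_C_def cartan_A_def)
  next
    case 3
    moreover have "(i = n - 1 \<and> j = n \<or> i = n \<and> j = n - 1) \<longleftrightarrow> j = n"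
      "i + j + 1 = 2 * n \<longleftrightarrow> j = n" "i \<noteq> n"
      using 3 assms by linarith+
    ultimately show ?thesis by (simp add: cartan_C_def cartan_A_def)
  next
    case 4
    moreover have "\<not> (i = n - 1 \<and> j = n \<or> i = n \<and> j = n - 1)" "i + j + 1 \<noteq> 2 * n"
      "i \<noteq> j" "i \<noteq> j + 1" "j \<noteq> i + 1"
      using 4 assms by linarith+
    ultimately show ?thesis by (simp add: cartan_C_def cartan_A_def)
  qed
  then show ?thesis
    by (simp only: cartan_A_mirror[OF assms(2,4)])
qed

lemma letter_bounds: "1 \<le> i \<Longrightarrow> i < 2 * n \<Longrightarrow> 1 \<le> letter n i \<and> letter n i \<le> n"
  unfolding letter_def by auto

lemma cartan_C_fold:
  assumes "1 \<le> i" "i < 2 * n" "1 \<le> j" "j < 2 * n"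
  shows "cartan_C n (letter n i) (letter n j) = cartan_A i j + cartan_A i (2 * n - j)"
proof -
  have j: "cartan_C n i' (letter n j) = cartan_A i' j + cartan_A i' (2 * n - j)"
    if "1 \<le> i'" "i' \<le> n" for i'
    using that assms cartan_C_eq[of i' n "letter n j"]
    by (cases "j \<le> n") (auto simp: letter_def)
  show ?thesis
  proof (cases "i \<le> n")
    case True
    then show ?thesis using assms j[of i] by (simp add: letter_def)
  next
    case False
    then show ?thesis
      using assms j[of "2 * n - i"] cartan_A_reflect[of i n j] cartan_A_reflect[of i n "2 * n - j"]
      by (simp add: letter_def)
  qed
qed

lemma sum_cartan_C_letter_interval:
  assumes "1 \<le> k" "k \<le> m" "m < 2 * n"
  shows "(\<Sum>i=k..m. \<Sum>j=k..m. cartan_C n (letter n i) (letter n j)) = (if m = 2 * n - k then 4 else 2)"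
proof -
  have reflect: "(\<Sum>j=k..m. f (2 * n - j)) = (\<Sum>j=2 * n - m..2 * n - k. f j)" for f :: "nat \<Rightarrow> int"
    by (rule sum.reindex_bij_witness[where i = "\<lambda>j. 2 * n - j" and j = "\<lambda>j. 2 * n - j"])
      (use assms in auto)
  have parity: "k \<noteq> Suc (2 * n - k)" "Suc m \<noteq> 2 * n - m"
    using assms by presburger+
  have mirror_eq: "k = 2 * n - m \<longleftrightarrow> m = 2 * n - k"
    using assms by linarith
  have "(\<Sum>i=k..m. \<Sum>j=k..m. cartan_C n (letter n i) (letter n j))
      = (\<Sum>i=k..m. \<Sum>j=k..m. cartan_A i j + cartan_A i (2 * n - j))"
    using assms by (intro sum.cong refl) (simp add: cartan_C_fold)
  also have "\<dots> = (\<Sum>i=k..m. \<Sum>j=k..m. cartan_A i j) + (\<Sum>i=k..m. \<Sum>j=2 * n - m..2 * n - k. cartan_A i j)"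
    by (simp only: sum.distrib reflect)
  also have "\<dots> = (if m = 2 * n - k then 4 else 2)"
    using assms parity mirror_eq by (simp add: sum_cartan_A)
  finally show ?thesis .
qed

lemma chi_pair_eq_power_cartan_C:
  fixes chi :: "nat \<Rightarrow> 'g \<Rightarrow> 'k::field"
  assumes diag: "\<And>i. 1 \<le> i \<Longrightarrow> i < n \<Longrightarrow> chi i (g i) = q"
    and diagn: "chi n (g n) = q ^ 2"
    and adj: "\<And>i. 1 < i \<Longrightarrow> i < n \<Longrightarrow> chi i (g (i - 1)) * chi (i - 1) (g i) = inverse q"
    and adjn: "chi (n - 1) (g n) * chi n (g (n - 1)) = inverse (q ^ 2)"
    and far: "\<And>i j. 1 \<le> i \<Longrightarrow> j \<le> n \<Longrightarrow> j > i + 1 \<Longrightarrow> chi i (g j) * chi j (g i) = 1"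
    and x: "1 \<le> x" "x \<le> n" and y: "1 \<le> y" "y \<le> n"
  shows "chi x (g y) * chi y (g x) = q powi cartan_C n x y"
proof -
  consider "x = y" | "x \<noteq> y" "x = n - 1 \<and> y = n \<or> x = n \<and> y = n - 1"
    | "\<not> (x = n - 1 \<and> y = n \<or> x = n \<and> y = n - 1)" "x = y + 1 \<or> y = x + 1"
    | "x + 1 < y \<or> y + 1 < x"
    by linarith
  then show ?thesis
  proof cases
    case 1
    then show ?thesis
      using diag[of x] diagn x
      by (cases "x = n") (auto simp: cartan_C_def power_int_numeral eval_nat_numeral)
  next
    case 2
    then have "cartan_C n x y = -2" by (simp add: cartan_C_def)
    moreover have "chi x (g y) * chi y (g x) = inverse (q ^ 2)"
      using 2 adjn by (auto simp: mult.commute)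
    ultimately show ?thesis by (simp add: power_int_minus)
  next
    case 3
    then have "cartan_C n x y = -1" by (auto simp: cartan_C_def)
    moreover have "chi (max x y) (g (max x y - 1)) * chi (max x y - 1) (g (max x y)) = inverse q"
      using 3 x y by (intro adj) auto
    then have "chi x (g y) * chi y (g x) = inverse q"
      using 3 by (auto simp: max_def mult.commute)
    ultimately show ?thesis by (simp add: power_int_minus)
  next
    case 4
    then have "cartan_C n x y = 0" by (auto simp: cartan_C_def)
    moreover have "chi x (g y) * chi y (g x) = 1"
      using 4 x y far[of x y] far[of y x] by (auto simp: mult.commute)
    ultimately show ?thesis by simp
  qed
qed

theorem lemma3p3:
  fixes chi :: "nat \<Rightarrow> 'g::ab_group_add \<Rightarrow> 'k::field"
    and g :: "nat \<Rightarrow> 'g" and n :: nat and q :: 'k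
  assumes n2: "n \<ge> 2"
    and chars: "\<And>i. 1 \<le> i \<Longrightarrow> i \<le> n \<Longrightarrow> is_character (chi i)"
    and q0: "q \<noteq> 0"
    and diag: "\<And>i. 1 \<le> i \<Longrightarrow> i < n \<Longrightarrow> chi i (g i) = q"
    and diagn: "chi n (g n) = q ^ 2"
    and adj: "\<And>i. 1 < i \<Longrightarrow> i < n \<Longrightarrow> chi i (g (i - 1)) * chi (i - 1) (g i) = inverse q"
    and adjn: "chi (n - 1) (g n) * chi n (g (n - 1)) = inverse (q ^ 2)"
    and far: "\<And>i j. 1 \<le> i \<Longrightarrow> j \<le> n \<Longrightarrow> j > i + 1 \<Longrightarrow> chi i (g j) * chi j (g i) = 1"
    and km: "1 \<le> k" "k \<le> m" "m < 2 * n"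
  shows "pw chi g (vw n k m) (vw n k m) = (if m = phi n k then q ^ 2 else q)"
proof -
  let ?w = "[k..<Suc m]"
  have letters: "1 \<le> letter n i \<and> letter n i \<le> n" if "i \<in> set ?w" for i
    using that km letter_bounds[of i n] by auto
  have pair: "chi x (g y) * chi y (g x) = q powi cartan_C n x y"
    if "1 \<le> x" "x \<le> n" "1 \<le> y" "y \<le> n" for x y
    by (rule chi_pair_eq_power_cartan_C[where chi = chi and g = g and n = n and q = q,
          OF diag diagn adj adjn far that])
  have "pw chi g (vw n k m) (vw n k m) = (\<Prod>x\<leftarrow>map (letter n) ?w. \<Prod>y\<leftarrow>map (letter n) ?w. chi x (g y))"
    unfolding vw_def using chars letters by (intro pw_eq_prod_pairs) auto
  also have "\<dots> = (\<Prod>i\<leftarrow>?w. \<Prod>j\<leftarrow>?w. chi (letter n i) (g (letter n j)))"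
    by (simp only: map_map comp_def)
  also have "\<dots> = q powi (if m = phi n k then 2 else 1)"
  proof (rule prod_pairs_eq_power_int[where E = "\<lambda>i j. cartan_C n (letter n i) (letter n j)"
        and D = "\<lambda>i. if letter n i = n then 2 else 1"])
    show "2 * (if m = phi n k then 2 else 1) = (\<Sum>i\<leftarrow>?w. \<Sum>j\<leftarrow>?w. cartan_C n (letter n i) (letter n j))"
      using sum_cartan_C_letter_interval[OF km]
      by (simp only: sum_set_upt_conv_sum_list_nat[symmetric] set_upt atLeastLessThanSuc_atLeastAtMost)
        (simp add: phi_def)
    show "chi (letter n i) (g (letter n i)) = q powi (if letter n i = n then 2 else 1)"
      if "i \<in> set ?w" for i
      using diag[of "letter n i"] diagn letters[OF that]
      by (cases "letter n i = n") (auto simp: power_int_numeral)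
    show "chi (letter n i) (g (letter n j)) * chi (letter n j) (g (letter n i))
        = q powi cartan_C n (letter n i) (letter n j)"
      if "i \<in> set ?w" "j \<in> set ?w" for i j
      using letters[OF that(1)] letters[OF that(2)] by (intro pair) auto
    show "cartan_C n (letter n i) (letter n i) = 2 * (if letter n i = n then 2 else 1)" for i
      by (simp add: cartan_C_def)
  qed (use q0 cartan_C_sym in auto)
  finally show ?thesis by simp
qed

end
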